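(* For every $n\geq1$, $m_1(\mathbb{R}^n,\Vert\cdot\Vert_\infty)=\frac{1}{2^n}$, where $\Vert x\Vert_\infty=\max_{1\leq i\leq n}|x_i|$.
   Context: A set $A$ avoids distance $1$ if $\Vert x-y\Vert\neq1$ for all $x,y\in A$. The density of a measurable $A\subset\mathbb{R}^n$ is $\delta(A)=\limsup_{R\to\infty}\operatorname{Vol}(A\cap[-R,R]^n)/\operatorname{Vol}([-R,R]^n)$, and $m_1(\mathbb{R}^n,\Vert\cdot\Vert)$ is the supremum of $\delta(A)$ over measurable $A$ avoiding distance $1$. *)

theory Defs
  imports "HOL-Analysis.Analysis"
begin

definition sup_norm :: "real^'n \<Rightarrow> real" where
  "sup_norm x = Max (range (\<lambda>i. \<bar>x $ i\<bar>))"

definition avoids_dist1 :: "(real^'n \<Rightarrow> real) \<Rightarrow> (real^'n) set \<Rightarrow> bool" where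
  "avoids_dist1 N A \<longleftrightarrow> (\<forall>x\<in>A. \<forall>y\<in>A. N (x - y) \<noteq> 1)"

definition cube :: "real \<Rightarrow> (real^'n) set" where
  "cube R = {x. \<forall>i. \<bar>x $ i\<bar> \<le> R}"

definition density :: "(real^'n) set \<Rightarrow> ereal" where
  "density A = Limsup at_top (\<lambda>R::real. ereal (measure lebesgue (A \<inter> cube R) / measure lebesgue (cube R :: (real^'n) set)))"

definition m1 :: "(real^'n \<Rightarrow> real) \<Rightarrow> ereal" where
  "m1 N = Sup {density A | A. A \<in> sets lebesgue \<and> avoids_dist1 N A}"

end

theory Submission
  imports Defs
begin

text \<open>
  Translating a set by the \<open>2^n\<close> vertices of the unit cube \<open>{0,1}^n\<close> is the whole argument.
  Any two distinct vertices are at sup-distance exactly 1, so for a set avoiding distance 1 these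
  \<open>2^n\<close> translates are pairwise disjoint; inside a large cube this gives density at most \<open>2^-n\<close>.
  Conversely the checkerboard \<open>{x. \<forall>i. \<lfloor>x$i\<rfloor> even}\<close> avoids distance 1 and its vertex translates
  cover space, so its density is at least \<open>2^-n\<close>.
\<close>

lemma cube_eq_cbox: "cube R = cbox (- (\<chi> i. R)) ((\<chi> i. R) :: real^'n)"
  unfolding cube_def by (auto simp: mem_box_cart abs_le_iff minus_le_iff)

lemma lmeasurable_cube [intro, simp]: "(cube R :: (real^'n) set) \<in> lmeasurable"
  unfolding cube_eq_cbox by simp

lemma sets_lebesgue_cube [intro, simp]: "(cube R :: (real^'n) set) \<in> sets lebesgue"
  using lmeasurable_cube by blast

lemma measure_cube:
  assumes "R \<ge> 0"
  shows "measure lebesgue (cube R :: (real^'n) set) = (2 * R) ^ CARD('n)"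
proof -
  have "cbox (- (\<chi> i. R)) ((\<chi> i. R) :: real^'n) \<noteq> {}"
    using assms by (auto simp: interval_ne_empty_cart)
  then show ?thesis
    unfolding cube_eq_cbox
    by (simp add: measure_completion content_cbox_cart del: measure_lborel_cbox_eq)
qed

lemma add_mem_cube: "x \<in> cube r \<Longrightarrow> y \<in> cube s \<Longrightarrow> x + y \<in> cube (r + s)"
  unfolding cube_def by (auto intro: order_trans[OF abs_triangle_ineq] add_mono)

lemma uminus_mem_cube: "x \<in> cube r \<Longrightarrow> - x \<in> cube r"
  unfolding cube_def by simp

lemma sup_norm_le_iff: "sup_norm x \<le> c \<longleftrightarrow> (\<forall>i. \<bar>x $ i\<bar> \<le> c)"
  unfolding sup_norm_def by (subst Max_le_iff) auto

lemma sup_norm_attained: "\<exists>i. sup_norm x = \<bar>x $ i\<bar>"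
proof -
  have "Max (range (\<lambda>i. \<bar>x $ i\<bar>)) \<in> range (\<lambda>i. \<bar>x $ i\<bar>)"
    by (rule Max_in) auto
  then show ?thesis unfolding sup_norm_def by (metis imageE)
qed

definition cube_vertex :: "'n set \<Rightarrow> real^'n" where
  "cube_vertex S = (\<chi> i. if i \<in> S then 1 else 0)"

lemma card_UNIV_set: "card (UNIV :: 'n::finite set set) = 2 ^ CARD('n)"
  using card_Pow[of "UNIV :: 'n set"] by (simp add: Pow_UNIV)

lemma cube_vertex_mem_cube: "cube_vertex S \<in> cube 1"
  by (auto simp: cube_def cube_vertex_def)

lemma sup_norm_cube_vertex_diff:
  assumes "S \<noteq> T"
  shows "sup_norm (cube_vertex S - cube_vertex T) = 1"
proof -
  obtain i where "i \<in> S \<and> i \<notin> T \<or> i \<in> T \<and> i \<notin> S"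
    using assms by blast
  then have "\<bar>(cube_vertex S - cube_vertex T) $ i\<bar> = 1"
    by (auto simp: cube_vertex_def)
  moreover have "sup_norm (cube_vertex S - cube_vertex T) \<le> 1"
    by (auto simp: sup_norm_le_iff cube_vertex_def)
  moreover have "\<bar>(cube_vertex S - cube_vertex T) $ i\<bar> \<le> sup_norm (cube_vertex S - cube_vertex T)"
    unfolding sup_norm_def by (rule Max_ge) auto
  ultimately show ?thesis by simp
qed

lemma avoids_dist1_disjoint_vertex_translates:
  assumes "avoids_dist1 sup_norm A"
  shows "disjoint_family (\<lambda>S. (+) (- cube_vertex S) ` A)"
  unfolding disjoint_family_on_def
proof (intro ballI impI equals0I)
  fix S T x
  assume "S \<noteq> T" and x: "x \<in> (+) (- cube_vertex S) ` A \<inter> (+) (- cube_vertex T) ` A"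
  have "x + cube_vertex U \<in> A" if "x \<in> (+) (- cube_vertex U) ` A" for U
    using that by auto
  then have "x + cube_vertex S \<in> A" "x + cube_vertex T \<in> A"
    using x by blast+
  moreover have "sup_norm ((x + cube_vertex S) - (x + cube_vertex T)) = 1"
    using sup_norm_cube_vertex_diff[OF \<open>S \<noteq> T\<close>] by simp
  ultimately show False
    using assms unfolding avoids_dist1_def by blast
qed

lemma measure_avoids_dist1_inter_cube_le:
  fixes A :: "(real^'n) set"
  assumes "A \<in> sets lebesgue" "avoids_dist1 sup_norm A" "R \<ge> 0"
  shows "measure lebesgue (A \<inter> cube R) \<le> (R + 1) ^ CARD('n)"
proof -
  define T where "T S = (+) (- cube_vertex S) ` (A \<inter> cube R)" for S
  have T_sets: "T S \<in> sets lebesgue" for S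
    unfolding T_def using assms(1) by (intro lebesgue_sets_translation sets.Int) simp_all
  have T_cube: "T S \<subseteq> cube (R + 1)" for S
    unfolding T_def using add_mem_cube uminus_mem_cube cube_vertex_mem_cube
    by (fastforce simp: add.commute)
  have T_fmeasurable: "T S \<in> fmeasurable lebesgue" for S
    using T_cube T_sets by (rule fmeasurableI2[OF lmeasurable_cube])
  have "disjoint_family T"
    using avoids_dist1_disjoint_vertex_translates[OF assms(2)]
    unfolding T_def disjoint_family_on_def by blast
  have "2 ^ CARD('n) * measure lebesgue (A \<inter> cube R) = (\<Sum>S\<in>UNIV. measure lebesgue (T S))"
    by (simp add: T_def measure_translation_subtract card_UNIV_set)
  also have "\<dots> = measure lebesgue (\<Union>S. T S)"
    using \<open>disjoint_family T\<close> T_sets T_fmeasurable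
    by (intro measure_finite_Union[symmetric]) (auto simp: fmeasurableD2 simp del: emeasure_completion)
  also have "\<dots> \<le> measure lebesgue (cube (R + 1) :: (real^'n) set)"
    using T_sets T_cube by (intro measure_mono_fmeasurable) auto
  also have "\<dots> = 2 ^ CARD('n) * (R + 1) ^ CARD('n)"
    unfolding power_mult_distrib[symmetric] using assms(3) by (intro measure_cube) simp
  finally show ?thesis by simp
qed

definition checkerboard :: "(real^'n) set" where
  "checkerboard = {x. \<forall>i. even \<lfloor>x $ i\<rfloor>}"

lemma checkerboard_sets_lebesgue: "checkerboard \<in> sets lebesgue"
proof -
  have "checkerboard \<in> sets borel"
    unfolding checkerboard_def by measurable
  then show ?thesis by (metis sets_lborel sets_completionI_sets)
qed

lemma avoids_dist1_checkerboard: "avoids_dist1 sup_norm checkerboard"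
  unfolding avoids_dist1_def
proof (intro ballI notI)
  fix x y assume "x \<in> checkerboard" "y \<in> checkerboard" and "sup_norm (x - y) = 1"
  moreover obtain i where "sup_norm (x - y) = \<bar>(x - y) $ i\<bar>"
    using sup_norm_attained by blast
  ultimately have "x $ i = y $ i + 1 \<or> y $ i = x $ i + 1"
    and "even \<lfloor>x $ i\<rfloor>" "even \<lfloor>y $ i\<rfloor>"
    by (auto simp: checkerboard_def)
  then show False by auto
qed

lemma diff_cube_vertex_mem_checkerboard:
  "x - cube_vertex {i. odd \<lfloor>x $ i\<rfloor>} \<in> checkerboard"
  by (auto simp: checkerboard_def cube_vertex_def)

lemma measure_checkerboard_inter_cube_ge:
  assumes "R \<ge> 1"
  shows "(R - 1) ^ CARD('n) \<le> measure lebesgue (checkerboard \<inter> cube R :: (real^'n) set)"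
proof -
  define T where "T S = (+) (cube_vertex S) ` (checkerboard \<inter> cube R :: (real^'n) set)" for S
  have T_sets: "T S \<in> sets lebesgue" for S
    unfolding T_def using checkerboard_sets_lebesgue
    by (intro lebesgue_sets_translation sets.Int) simp_all
  have "(\<Union>S. T S) \<subseteq> cube (R + 1)"
    unfolding T_def using add_mem_cube cube_vertex_mem_cube by (fastforce simp: add.commute)
  then have T_fmeasurable: "(\<Union>S. T S) \<in> fmeasurable lebesgue"
    using T_sets by (intro fmeasurableI2[OF lmeasurable_cube]) auto
  have cover: "cube (R - 1) \<subseteq> (\<Union>S. T S)"
  proof
    fix x :: "real^'n" assume "x \<in> cube (R - 1)"
    define S where "S = {i. odd \<lfloor>x $ i\<rfloor>}"
    have "x - cube_vertex S \<in> cube R"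
      using add_mem_cube[OF \<open>x \<in> cube (R - 1)\<close> uminus_mem_cube[OF cube_vertex_mem_cube]]
      by simp
    then have "x - cube_vertex S \<in> checkerboard \<inter> cube R"
      using diff_cube_vertex_mem_checkerboard S_def by blast
    then have "x \<in> T S"
      unfolding T_def by (rule rev_image_eqI) simp
    then show "x \<in> (\<Union>S. T S)" by blast
  qed
  have "2 ^ CARD('n) * (R - 1) ^ CARD('n) = measure lebesgue (cube (R - 1) :: (real^'n) set)"
    unfolding power_mult_distrib[symmetric] using assms by (intro measure_cube[symmetric]) simp
  also have "\<dots> \<le> measure lebesgue (\<Union>S. T S)"
    using cover T_fmeasurable by (intro measure_mono_fmeasurable) auto
  also have "\<dots> \<le> (\<Sum>S\<in>UNIV. measure lebesgue (T S))"
    using T_sets by (intro measure_UNION_le) auto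
  also have "\<dots> = 2 ^ CARD('n) * measure lebesgue (checkerboard \<inter> cube R :: (real^'n) set)"
    by (simp add: T_def measure_translation card_UNIV_set)
  finally show ?thesis by simp
qed

lemma tendsto_shifted_power_ratio:
  "((\<lambda>R::real. (R + a) ^ n / (2 * R) ^ n) \<longlongrightarrow> 1 / 2 ^ n) at_top"
proof -
  have "((\<lambda>R::real. a / R) \<longlongrightarrow> 0) at_top"
    by (intro tendsto_divide_0[OF tendsto_const] filterlim_at_top_imp_at_infinity[OF filterlim_ident])
  then have "((\<lambda>R::real. (1 + a / R) ^ n / 2 ^ n) \<longlongrightarrow> (1 + 0) ^ n / 2 ^ n) at_top"
    by (intro tendsto_intros) auto
  moreover have "\<forall>\<^sub>F R in at_top. (1 + a / R) ^ n / 2 ^ n = (R + a) ^ n / (2 * R) ^ n"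
    using eventually_gt_at_top[of "0::real"]
    by eventually_elim (simp add: field_simps power_divide power_mult_distrib)
  ultimately show ?thesis
    by (simp add: tendsto_cong)
qed

lemma density_le_of_eventually_le:
  fixes A :: "(real^'n) set"
  assumes "\<forall>\<^sub>F R in at_top. measure lebesgue (A \<inter> cube R) \<le> f R"
    and "((\<lambda>R. f R / (2 * R) ^ CARD('n)) \<longlongrightarrow> L) at_top"
  shows "density A \<le> ereal L"
proof -
  have "\<forall>\<^sub>F R in at_top. ereal (measure lebesgue (A \<inter> cube R) / measure lebesgue (cube R :: (real^'n) set))
      \<le> ereal (f R / (2 * R) ^ CARD('n))"
    using assms(1) eventually_gt_at_top[of "0::real"]
    by eventually_elim (simp add: measure_cube divide_right_mono)
  then have "density A \<le> Limsup at_top (\<lambda>R. ereal (f R / (2 * R) ^ CARD('n)))"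
    unfolding density_def by (rule Limsup_mono)
  also have "\<dots> = ereal L"
    using assms(2) by (intro lim_imp_Limsup tendsto_ereal) simp_all
  finally show ?thesis .
qed

lemma density_ge_of_eventually_ge:
  fixes A :: "(real^'n) set"
  assumes "\<forall>\<^sub>F R in at_top. f R \<le> measure lebesgue (A \<inter> cube R)"
    and "((\<lambda>R. f R / (2 * R) ^ CARD('n)) \<longlongrightarrow> L) at_top"
  shows "ereal L \<le> density A"
proof -
  have "\<forall>\<^sub>F R in at_top. ereal (f R / (2 * R) ^ CARD('n))
      \<le> ereal (measure lebesgue (A \<inter> cube R) / measure lebesgue (cube R :: (real^'n) set))"
    using assms(1) eventually_gt_at_top[of "0::real"]
    by eventually_elim (simp add: measure_cube divide_right_mono)
  then have "Liminf at_top (\<lambda>R. ereal (f R / (2 * R) ^ CARD('n)))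
      \<le> Liminf at_top (\<lambda>R. ereal (measure lebesgue (A \<inter> cube R) / measure lebesgue (cube R :: (real^'n) set)))"
    by (rule Liminf_mono)
  moreover have "Liminf at_top (\<lambda>R. ereal (f R / (2 * R) ^ CARD('n))) = ereal L"
    using assms(2) by (intro lim_imp_Liminf tendsto_ereal) simp_all
  ultimately show ?thesis
    unfolding density_def using Liminf_le_Limsup[OF trivial_limit_at_top_linorder] order_trans
    by metis
qed

lemma density_avoids_dist1_le:
  fixes A :: "(real^'n) set"
  assumes "A \<in> sets lebesgue" "avoids_dist1 sup_norm A"
  shows "density A \<le> ereal (1 / 2 ^ CARD('n))"
proof (rule density_le_of_eventually_le)
  show "\<forall>\<^sub>F R in at_top. measure lebesgue (A \<inter> cube R) \<le> (R + 1) ^ CARD('n)"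
    using eventually_ge_at_top[of "0::real"]
    by eventually_elim (rule measure_avoids_dist1_inter_cube_le[OF assms])
qed (rule tendsto_shifted_power_ratio)

lemma density_checkerboard_ge: "ereal (1 / 2 ^ CARD('n)) \<le> density (checkerboard :: (real^'n) set)"
proof (rule density_ge_of_eventually_ge)
  show "\<forall>\<^sub>F R in at_top. (R - 1) ^ CARD('n) \<le> measure lebesgue (checkerboard \<inter> cube R :: (real^'n) set)"
    using eventually_ge_at_top[of "1::real"]
    by eventually_elim (rule measure_checkerboard_inter_cube_ge)
  show "((\<lambda>R::real. (R - 1) ^ CARD('n) / (2 * R) ^ CARD('n)) \<longlongrightarrow> 1 / 2 ^ CARD('n)) at_top"
    using tendsto_shifted_power_ratio[of "-1"] by simp
qed

theorem proposition2:
  shows "m1 (sup_norm :: real^'n \<Rightarrow> real) = ereal (1 / 2 ^ CARD('n))"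
  unfolding m1_def
proof (rule antisym)
  show "Sup {density A | A. A \<in> sets lebesgue \<and> avoids_dist1 (sup_norm :: real^'n \<Rightarrow> real) A}
      \<le> ereal (1 / 2 ^ CARD('n))"
    by (rule Sup_least) (auto intro: density_avoids_dist1_le)
  show "ereal (1 / 2 ^ CARD('n))
      \<le> Sup {density A | A. A \<in> sets lebesgue \<and> avoids_dist1 (sup_norm :: real^'n \<Rightarrow> real) A}"
    using checkerboard_sets_lebesgue avoids_dist1_checkerboard
    by (intro Sup_upper2[OF _ density_checkerboard_ge]) blast
qed

end
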